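(* Let $A>1$ and let $\mathcal{D}_A=\{(\mathbf f,\mathbf g,\mathbf F,\mathbf G,\mathbf u,\mathbf v)\in\mathbb{R}^6:\ \mathbf u,\mathbf v>0,\ 1\le\mathbf u\mathbf v\le A,\ \mathbf f^2\le\mathbf F\mathbf v,\ \mathbf g^2\le\mathbf G\mathbf u\}$. If $X,X_+,X_-\in\mathcal{D}_A$ and $X=(X_++X_-)/2$, then for every $\theta\in(0,1)$ the point $\theta X_++(1-\theta)X_-$ belongs to $\mathcal{D}_{A'}$, where $A'=9A/8$. *)

theory Defs
  imports Complex_Main
begin

type_synonym pt6 = "real \<times> real \<times> real \<times> real \<times> real \<times> real"

definition inD :: "real \<Rightarrow> pt6 \<Rightarrow> bool" where
  "inD A X = (case X of (f, g, F, G, u, v) \<Rightarrow>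
      u > 0 \<and> v > 0 \<and> 1 \<le> u * v \<and> u * v \<le> A \<and> f\<^sup>2 \<le> F * v \<and> g\<^sup>2 \<le> G * u)"

definition comb :: "real \<Rightarrow> pt6 \<Rightarrow> pt6 \<Rightarrow> pt6" where
  "comb t X Y = (case X of (f1, g1, F1, G1, u1, v1) \<Rightarrow> case Y of (f2, g2, F2, G2, u2, v2) \<Rightarrow>
     (t*f1 + (1-t)*f2, t*g1 + (1-t)*g2, t*F1 + (1-t)*F2, t*G1 + (1-t)*G2,
      t*u1 + (1-t)*u2, t*v1 + (1-t)*v2))"

end

theory Submission
  imports Defs
begin

(* We check these conditions separately for a
   convex combination  t X+ + (1-t) X-  of two points of D_A.
   - The constraints f^2 <= F v (with v > 0) cut out a convex set, the
     epigraph of the perspective function (f, v) |-> f^2/v; this gives the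
     two quadratic constraints (positivity of u and v is immediate).
   - The product of the mixed coordinates expands as
       t^2 a + (1-t)^2 b + t(1-t) S,   a = u1 v1,  b = u2 v2,  S = u1 v2 + u2 v1.
     Since ab >= 1 we get S >= 2 by AM-GM, whence the product is >= 1.
   - The hypothesis that the midpoint lies in D_A says S <= 4A - a - b;
     inserting this and a, b <= A bounds the product by A (3t - 2t^2) <= 9A/8
     for t >= 1/2; the case t < 1/2 follows by swapping the two points. *)

text \<open>Convexity of the perspective epigraph
  \<open>{(f, F, v). v > 0 \<and> f\<^sup>2 \<le> F * v}\<close>, in the form of a weighted
  Cauchy--Schwarz inequality.\<close>

lemma perspective_epigraph_convex:
  fixes a b f1 f2 F1 F2 v1 v2 :: real
  assumes "a \<ge> 0" "b \<ge> 0" "v1 > 0" "v2 > 0"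
    and "f1\<^sup>2 \<le> F1 * v1" "f2\<^sup>2 \<le> F2 * v2"
  shows "(a*f1 + b*f2)\<^sup>2 \<le> (a*F1 + b*F2) * (a*v1 + b*v2)"
proof -
  have gap: "(a*f1\<^sup>2/v1 + b*f2\<^sup>2/v2) * (a*v1 + b*v2) - (a*f1 + b*f2)\<^sup>2
             = a*b*(f1*v2 - f2*v1)\<^sup>2 / (v1*v2)"
    using assms(3,4) by (simp add: field_simps power2_eq_square)
  have "a*b*(f1*v2 - f2*v1)\<^sup>2 / (v1*v2) \<ge> 0"
    using assms(1-4) by simp
  hence cs: "(a*f1 + b*f2)\<^sup>2 \<le> (a*f1\<^sup>2/v1 + b*f2\<^sup>2/v2) * (a*v1 + b*v2)"
    using gap by linarith
  have "f1\<^sup>2/v1 \<le> F1" "f2\<^sup>2/v2 \<le> F2"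
    using assms(3-6) by (simp_all add: divide_le_eq)
  hence "a*f1\<^sup>2/v1 + b*f2\<^sup>2/v2 \<le> a*F1 + b*F2"
    using assms(1,2) by (metis add_mono mult_left_mono times_divide_eq_right)
  moreover have "a*v1 + b*v2 \<ge> 0"
    using assms(1-4) by simp
  ultimately have "(a*f1\<^sup>2/v1 + b*f2\<^sup>2/v2) * (a*v1 + b*v2) \<le> (a*F1 + b*F2) * (a*v1 + b*v2)"
    by (rule mult_right_mono)
  with cs show ?thesis by linarith
qed

lemma mixed_product_expand:
  fixes t u1 u2 v1 v2 :: real
  shows "(t*u1 + (1-t)*u2) * (t*v1 + (1-t)*v2)
         = t\<^sup>2 * (u1*v1) + (1-t)\<^sup>2 * (u2*v2) + t*(1-t) * (u1*v2 + u2*v1)"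
  by (simp add: power2_eq_square algebra_simps)

lemma cross_term_ge_two:
  fixes u1 u2 v1 v2 :: real
  assumes "u1 > 0" "u2 > 0" "v1 > 0" "v2 > 0" "1 \<le> u1*v1" "1 \<le> u2*v2"
  shows "2 \<le> u1*v2 + u2*v1"
proof -
  define p q where "p = u1*v2" and "q = u2*v1"
  have "(1::real) * 1 \<le> (u1*v1) * (u2*v2)"
    using assms by (intro mult_mono) auto
  hence pq: "1 \<le> p*q"
    unfolding p_def q_def by (simp add: algebra_simps)
  have "(p + q)\<^sup>2 = (p - q)\<^sup>2 + 4 * (p*q)"
    by (simp add: power2_eq_square algebra_simps)
  moreover have "0 \<le> (p - q)\<^sup>2" and "(2::real)\<^sup>2 = 4"
    by simp_all
  ultimately have "2\<^sup>2 \<le> (p + q)\<^sup>2"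
    using pq by linarith
  moreover have "0 \<le> p + q"
    unfolding p_def q_def using assms by simp
  ultimately have "2 \<le> p + q"
    by (rule power2_le_imp_le)
  thus ?thesis
    unfolding p_def q_def .
qed

lemma mixed_product_ge_one:
  fixes t u1 u2 v1 v2 :: real
  assumes "0 \<le> t" "t \<le> 1" "u1 > 0" "u2 > 0" "v1 > 0" "v2 > 0"
    and "1 \<le> u1*v1" "1 \<le> u2*v2"
  shows "1 \<le> (t*u1 + (1-t)*u2) * (t*v1 + (1-t)*v2)"
proof -
  have "t\<^sup>2 \<le> t\<^sup>2 * (u1*v1)" "(1-t)\<^sup>2 \<le> (1-t)\<^sup>2 * (u2*v2)"
    using mult_left_mono[OF assms(7), of "t\<^sup>2"] mult_left_mono[OF assms(8), of "(1-t)\<^sup>2"]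
    by simp_all
  moreover have "t*(1-t)*2 \<le> t*(1-t) * (u1*v2 + u2*v1)"
    using assms cross_term_ge_two by (intro mult_left_mono) auto
  moreover have "t\<^sup>2 + (1-t)\<^sup>2 + t*(1-t)*2 = 1"
    by (simp add: power2_eq_square algebra_simps)
  ultimately show ?thesis
    unfolding mixed_product_expand by linarith
qed

text \<open>The elementary quadratic estimate behind the constant 9/8:
  \<open>9/8 - 3t + 2t\<^sup>2 = 2(t - 3/4)\<^sup>2\<close>.\<close>

lemma quadratic_le_nine_eighths:
  fixes t :: real
  shows "3*t - 2*t\<^sup>2 \<le> 9/8"
proof -
  have "9/8 - (3*t - 2*t\<^sup>2) = 2 * (t - 3/4)\<^sup>2"
    by (simp add: power2_eq_square algebra_simps)
  moreover have "0 \<le> 2 * (t - 3/4)\<^sup>2"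
    by simp
  ultimately show ?thesis by linarith
qed

lemma mixed_product_upper_heavy:
  fixes t u1 u2 v1 v2 A :: real
  assumes "1/2 \<le> t" "t \<le> 1" "u1 > 0" "u2 > 0" "v1 > 0" "v2 > 0"
    and "u1*v1 \<le> A"
    and mid: "((u1 + u2)/2) * ((v1 + v2)/2) \<le> A"
  shows "(t*u1 + (1-t)*u2) * (t*v1 + (1-t)*v2) \<le> 9*A/8"
proof -
  define a b S where "a = u1*v1" and "b = u2*v2" and "S = u1*v2 + u2*v1"
  have S_le: "S \<le> 4*A - a - b"
    using mid unfolding a_def b_def S_def by (simp add: algebra_simps)
  have "0 < a" "0 < b"
    unfolding a_def b_def using assms(3-6) by simp_all
  have "(t*u1 + (1-t)*u2) * (t*v1 + (1-t)*v2) = t\<^sup>2*a + (1-t)\<^sup>2*b + t*(1-t)*S"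
    unfolding mixed_product_expand a_def b_def S_def ..
  also have "\<dots> \<le> t\<^sup>2*a + (1-t)\<^sup>2*b + t*(1-t)*(4*A - a - b)"
    using S_le assms(1,2) by (simp add: mult_left_mono)
  also have "\<dots> = a*t*(2*t - 1) + b*(1-t)*(1 - 2*t) + 4*A*t*(1-t)"
    by (simp add: power2_eq_square algebra_simps)
  also have "\<dots> \<le> A*t*(2*t - 1) + 0 + 4*A*t*(1-t)"
  proof -
    have "a*t*(2*t - 1) \<le> A*t*(2*t - 1)"
      using assms(1,7) unfolding a_def by (simp add: mult_right_mono)
    moreover have "b*(1-t)*(1 - 2*t) \<le> 0"
      using assms(1,2) \<open>0 < b\<close> by (simp add: mult_nonneg_nonpos)
    ultimately show ?thesis by linarith
  qed
  also have "\<dots> = A * (3*t - 2*t\<^sup>2)"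
    by (simp add: power2_eq_square algebra_simps)
  also have "\<dots> \<le> A * (9/8)"
    using quadratic_le_nine_eighths \<open>0 < a\<close> assms(7) unfolding a_def
    by (intro mult_left_mono) auto
  finally show ?thesis by simp
qed

text \<open>Upper bound for all weights in [0, 1]; the case \<open>t < 1/2\<close> is the
  previous one with the two points interchanged, since the midpoint condition
  is symmetric.\<close>

lemma mixed_product_upper:
  fixes t u1 u2 v1 v2 A :: real
  assumes "0 \<le> t" "t \<le> 1" "u1 > 0" "u2 > 0" "v1 > 0" "v2 > 0"
    and "u1*v1 \<le> A" "u2*v2 \<le> A"
    and mid: "((u1 + u2)/2) * ((v1 + v2)/2) \<le> A"
  shows "(t*u1 + (1-t)*u2) * (t*v1 + (1-t)*v2) \<le> 9*A/8"
proof (cases "1/2 \<le> t")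
  case True
  then show ?thesis
    using assms mixed_product_upper_heavy by blast
next
  case False
  have "((1-t)*u2 + (1-(1-t))*u1) * ((1-t)*v2 + (1-(1-t))*v1) \<le> 9*A/8"
    using False assms
    by (intro mixed_product_upper_heavy) (simp_all add: add.commute)
  then show ?thesis
    by (simp add: add.commute)
qed

theorem lemma5p1:
  fixes A \<theta> :: real and X Xp Xm :: pt6
  assumes "A > 1"
    and "inD A X" and "inD A Xp" and "inD A Xm"
    and "X = comb (1/2) Xp Xm"
    and "0 < \<theta>" and "\<theta> < 1"
  shows "inD (9 * A / 8) (comb \<theta> Xp Xm)"
proof -
  obtain f1 g1 F1 G1 u1 v1 where p: "Xp = (f1, g1, F1, G1, u1, v1)"
    by (cases Xp) auto
  obtain f2 g2 F2 G2 u2 v2 where m: "Xm = (f2, g2, F2, G2, u2, v2)"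
    by (cases Xm) auto
  have hp: "u1 > 0" "v1 > 0" "1 \<le> u1*v1" "u1*v1 \<le> A" "f1\<^sup>2 \<le> F1*v1" "g1\<^sup>2 \<le> G1*u1"
    using assms(3) p by (auto simp: inD_def)
  have hm: "u2 > 0" "v2 > 0" "1 \<le> u2*v2" "u2*v2 \<le> A" "f2\<^sup>2 \<le> F2*v2" "g2\<^sup>2 \<le> G2*u2"
    using assms(4) m by (auto simp: inD_def)
  have "(1/2*u1 + (1 - 1/2)*u2) * (1/2*v1 + (1 - 1/2)*v2) \<le> A"
    using assms(2,5) p m by (simp only: inD_def comb_def prod.case)
  hence mid: "((u1 + u2)/2) * ((v1 + v2)/2) \<le> A"
    by (simp add: field_simps)
  have t: "0 \<le> \<theta>" "0 \<le> 1 - \<theta>" "\<theta> \<le> 1"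
    using assms(6,7) by simp_all
  have pos: "\<theta>*u1 + (1-\<theta>)*u2 > 0" "\<theta>*v1 + (1-\<theta>)*v2 > 0"
    using assms(6,7) hp(1,2) hm(1,2) by (simp_all add: add_pos_pos)
  show ?thesis
    unfolding p m comb_def inD_def
    using pos
      perspective_epigraph_convex[OF t(1,2) hp(2) hm(2) hp(5) hm(5)]
      perspective_epigraph_convex[OF t(1,2) hp(1) hm(1) hp(6) hm(6)]
      mixed_product_ge_one[OF t(1,3) hp(1) hm(1) hp(2) hm(2) hp(3) hm(3)]
      mixed_product_upper[OF t(1,3) hp(1) hm(1) hp(2) hm(2) hp(4) hm(4) mid]
    by simp
qed

end
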